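(* Let $\phi\in L^2(-1,0)$ and $T>1$, and consider the control problem $$\dot x(t)=x(t-1)+\int_{-1}^0x(t+\tau)\phi(\tau)\,d\tau+u(t),\ t>0,\qquad x(t)=x_0(t),\ t\in(-1,0),\ x(0)=\xi,$$ with initial data $\vec x=(\xi,x_0)\in\mathcal M=\mathbb C\times L^2(-1,0)$. The optimal control depends linearly on the initial data: if $u_1$ and $u_2$ are solutions of the problem $\|u\|_{L^2(0,T)}\to\min$, $u\in U(\vec x;T)$, for $\vec x=\vec x_1$ and $\vec x=\vec x_2$ respectively, then $u_1+u_2$ solves this problem for $\vec x=\vec x_1+\vec x_2$.
   Context: For $u\in L^2(0,T)$ the solution $x(t;\vec x,u)$ is the function equal to $x_0$ on $(-1,0)$ and, for $t\ge0$, absolutely continuous with $x(t)=\xi+\int_0^t\big[x(s-1)+\int_{-1}^0x(s+\tau)\phi(\tau)d\tau+u(s)\big]ds$. $U(\vec x;T)$ is the set of all $u\in L^2(0,T)$ such that $x(t;\vec x,u)=0$ for $t\in(T-1,T)$. *)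

theory Defs
  imports "HOL-Analysis.Analysis"
begin

definition L2_on :: "real set \<Rightarrow> (real \<Rightarrow> complex) \<Rightarrow> bool" where
  "L2_on A f \<longleftrightarrow> set_borel_measurable lborel A f \<and>
                  set_integrable lborel A (\<lambda>t. (cmod (f t))\<^sup>2)"

definition L2_norm_sq :: "real \<Rightarrow> (real \<Rightarrow> complex) \<Rightarrow> real" where
  "L2_norm_sq T u = (LINT t:{0<..<T}|lborel. (cmod (u t))\<^sup>2)"

text \<open>x is the solution on (-1,T] of the delay system with kernel phi, initial data (xi, x0),
  and control u: x = x0 on (-1,0) and, for t in [0,T],
  x(t) = xi + int_0^t [x(s-1) + int_{-1}^0 x(s+tau) phi(tau) dtau + u(s)] ds
  (with all integrands integrable, so x is absolutely continuous on [0,T]).\<close>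
definition is_solution ::
  "(real \<Rightarrow> complex) \<Rightarrow> real \<Rightarrow> complex \<Rightarrow> (real \<Rightarrow> complex) \<Rightarrow> (real \<Rightarrow> complex)
     \<Rightarrow> (real \<Rightarrow> complex) \<Rightarrow> bool" where
  "is_solution \<phi> T \<xi> x0 u x \<longleftrightarrow>
     (\<forall>t\<in>{-1<..<0}. x t = x0 t) \<and>
     (\<forall>s\<in>{0..T}. set_integrable lborel {-1<..<0} (\<lambda>\<tau>. x (s + \<tau>) * \<phi> \<tau>)) \<and>
     set_integrable lborel {0..T}
       (\<lambda>s. x (s - 1) + (LINT \<tau>:{-1<..<0}|lborel. x (s + \<tau>) * \<phi> \<tau>) + u s) \<and>
     (\<forall>t\<in>{0..T}. x t = \<xi> + (LINT s:{0..t}|lborel.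
        x (s - 1) + (LINT \<tau>:{-1<..<0}|lborel. x (s + \<tau>) * \<phi> \<tau>) + u s))"

definition U_set :: "(real \<Rightarrow> complex) \<Rightarrow> real \<Rightarrow> complex \<Rightarrow> (real \<Rightarrow> complex)
     \<Rightarrow> (real \<Rightarrow> complex) set" where
  "U_set \<phi> T \<xi> x0 = {u. L2_on {0<..<T} u \<and>
      (\<exists>x. is_solution \<phi> T \<xi> x0 u x \<and> (\<forall>t\<in>{T-1<..<T}. x t = 0))}"

definition optimal_control :: "(real \<Rightarrow> complex) \<Rightarrow> real \<Rightarrow> complex \<Rightarrow> (real \<Rightarrow> complex)
     \<Rightarrow> (real \<Rightarrow> complex) \<Rightarrow> bool" where
  "optimal_control \<phi> T \<xi> x0 u \<longleftrightarrow> u \<in> U_set \<phi> T \<xi> x0 \<and>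
      (\<forall>v\<in>U_set \<phi> T \<xi> x0. L2_norm_sq T u \<le> L2_norm_sq T v)"

end

theory Submission
  imports Defs
begin

(* Because the solution depends linearly on (xi, x0, u) jointly, the admissible controls
   U(x;T) form the affine subspace u + U(0;T).  Perturbing a minimiser u by r w with w a null
   control and differentiating in r shows that u is optimal iff it lies in U(x;T) and is
   orthogonal to U(0;T).  Both conditions are additive in (x, u), so u1 + u2 is optimal for
   x1 + x2.  The hypotheses on phi, T and the initial functions are only needed for the
   existence of optimal controls, which is assumed here. *)

lemma set_borel_measurable_lincomb:
  fixes f g :: "'a \<Rightarrow> complex"
  assumes "set_borel_measurable M A f" "set_borel_measurable M A g"
  shows "set_borel_measurable M A (\<lambda>t. a * f t + b * g t)"
proof -
  have eq: "(\<lambda>t. indicator A t *\<^sub>R (a * f t + b * g t)) =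
            (\<lambda>t. a * (indicator A t *\<^sub>R f t) + b * (indicator A t *\<^sub>R g t))"
    by (rule ext) (simp split: split_indicator)
  show ?thesis
    using assms unfolding set_borel_measurable_def eq by measurable
qed

lemma set_borel_measurable_Re_mult_cnj:
  assumes "set_borel_measurable M A f" "set_borel_measurable M A g"
  shows "set_borel_measurable M A (\<lambda>t. Re (f t * cnj (g t)))"
proof -
  have eq: "(\<lambda>t. indicator A t *\<^sub>R Re (f t * cnj (g t))) =
            (\<lambda>t. Re (indicator A t *\<^sub>R f t) * Re (indicator A t *\<^sub>R g t) +
                 Im (indicator A t *\<^sub>R f t) * Im (indicator A t *\<^sub>R g t))"
    by (auto split: split_indicator)
  show ?thesis
    using assms unfolding set_borel_measurable_def eq by measurable
qed

lemma set_borel_measurable_cmod_power2: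
  assumes "set_borel_measurable M A f"
  shows "set_borel_measurable M A (\<lambda>t. (cmod (f t))\<^sup>2)"
proof -
  have eq: "(\<lambda>t. indicator A t *\<^sub>R (cmod (f t))\<^sup>2) = (\<lambda>t. (cmod (indicator A t *\<^sub>R f t))\<^sup>2)"
    by (auto split: split_indicator)
  show ?thesis
    using assms unfolding set_borel_measurable_def eq by measurable
qed

lemma cmod_add_power2_le: "(cmod (z + w))\<^sup>2 \<le> 2 * (cmod z)\<^sup>2 + 2 * (cmod w)\<^sup>2"
proof -
  have "(cmod (z + w))\<^sup>2 \<le> (cmod z + cmod w)\<^sup>2"
    by (simp add: norm_triangle_ineq power_mono)
  also have "\<dots> \<le> 2 * (cmod z)\<^sup>2 + 2 * (cmod w)\<^sup>2"
    using sum_squares_bound[of "cmod z" "cmod w"] by (simp add: power2_sum)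
  finally show ?thesis .
qed

lemma abs_Re_mult_cnj_le: "\<bar>Re (z * cnj w)\<bar> \<le> (cmod z)\<^sup>2 + (cmod w)\<^sup>2"
proof -
  have "\<bar>Re (z * cnj w)\<bar> \<le> cmod z * cmod w"
    by (metis abs_Re_le_cmod complex_mod_cnj norm_mult)
  also have "\<dots> \<le> (cmod z)\<^sup>2 + (cmod w)\<^sup>2"
  proof -
    have "0 \<le> cmod z * cmod w" by simp
    then show ?thesis
      using sum_squares_bound[of "cmod z" "cmod w"] by linarith
  qed
  finally show ?thesis .
qed

lemma cmod_add_scaled_power2:
  "(cmod (z + of_real r * w))\<^sup>2 = (cmod z)\<^sup>2 + 2 * r * Re (z * cnj w) + r\<^sup>2 * (cmod w)\<^sup>2"
  unfolding cmod_power2 by (simp add: power2_eq_square algebra_simps)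

lemma L2_on_mult:
  assumes "L2_on A f"
  shows "L2_on A (\<lambda>t. c * f t)"
  using assms unfolding L2_on_def
  by (auto simp: norm_mult power_mult_distrib set_borel_measurable_lincomb[where b = 0, simplified])

lemma L2_on_add:
  assumes "L2_on A f" "L2_on A g"
  shows "L2_on A (\<lambda>t. f t + g t)"
proof -
  have meas: "set_borel_measurable lborel A (\<lambda>t. f t + g t)"
    using assms set_borel_measurable_lincomb[of lborel A f g 1 1] unfolding L2_on_def by simp
  have "set_integrable lborel A (\<lambda>t. 2 * (cmod (f t))\<^sup>2 + 2 * (cmod (g t))\<^sup>2)"
    using assms unfolding L2_on_def by auto
  then have "set_integrable lborel A (\<lambda>t. (cmod (f t + g t))\<^sup>2)"
    by (rule set_integrable_bound[OF _ set_borel_measurable_cmod_power2[OF meas]])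
       (auto intro: order_trans[OF _ abs_ge_self] cmod_add_power2_le)
  with meas show ?thesis unfolding L2_on_def by blast
qed

lemma L2_on_lincomb:
  assumes "L2_on A f" "L2_on A g"
  shows "L2_on A (\<lambda>t. a * f t + b * g t)"
  using assms by (intro L2_on_add L2_on_mult)

lemma set_integrable_Re_mult_cnj:
  assumes "L2_on A f" "L2_on A g"
  shows "set_integrable lborel A (\<lambda>t. Re (f t * cnj (g t)))"
proof -
  have bound: "norm (Re (f t * cnj (g t))) \<le> norm ((cmod (f t))\<^sup>2 + (cmod (g t))\<^sup>2)" for t
    using abs_Re_mult_cnj_le[of "f t" "g t"] by simp
  have "set_integrable lborel A (\<lambda>t. (cmod (f t))\<^sup>2 + (cmod (g t))\<^sup>2)"
    using assms unfolding L2_on_def by auto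
  then show ?thesis
    by (rule set_integrable_bound[OF _ set_borel_measurable_Re_mult_cnj])
       (use assms bound in \<open>auto simp: L2_on_def\<close>)
qed

lemma L2_norm_sq_nonneg: "L2_norm_sq T u \<ge> 0"
  unfolding L2_norm_sq_def set_lebesgue_integral_def
  by (rule integral_nonneg_AE) (auto split: split_indicator)

lemma set_integral_lincomb:
  fixes f g :: "'a \<Rightarrow> complex"
  assumes "set_integrable M A f" "set_integrable M A g"
  shows "(LINT t:A|M. a * f t + b * g t) = a * (LINT t:A|M. f t) + b * (LINT t:A|M. g t)"
  using assms by simp

definition delay_rhs ::
  "(real \<Rightarrow> complex) \<Rightarrow> (real \<Rightarrow> complex) \<Rightarrow> (real \<Rightarrow> complex) \<Rightarrow> real \<Rightarrow> complex" where
  "delay_rhs \<phi> x u s = x (s - 1) + (LINT \<tau>:{-1<..<0}|lborel. x (s + \<tau>) * \<phi> \<tau>) + u s"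

lemma is_solution_iff_delay_rhs:
  "is_solution \<phi> T \<xi> x0 u x \<longleftrightarrow>
     (\<forall>t\<in>{-1<..<0}. x t = x0 t) \<and>
     (\<forall>s\<in>{0..T}. set_integrable lborel {-1<..<0} (\<lambda>\<tau>. x (s + \<tau>) * \<phi> \<tau>)) \<and>
     set_integrable lborel {0..T} (delay_rhs \<phi> x u) \<and>
     (\<forall>t\<in>{0..T}. x t = \<xi> + (LINT s:{0..t}|lborel. delay_rhs \<phi> x u s))"
  unfolding is_solution_def delay_rhs_def ..

lemma delay_rhs_lincomb:
  assumes "set_integrable lborel {-1<..<0} (\<lambda>\<tau>. x (s + \<tau>) * \<phi> \<tau>)"
    and "set_integrable lborel {-1<..<0} (\<lambda>\<tau>. y (s + \<tau>) * \<phi> \<tau>)"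
  shows "delay_rhs \<phi> (\<lambda>t. a * x t + b * y t) (\<lambda>t. a * u t + b * v t) s =
         a * delay_rhs \<phi> x u s + b * delay_rhs \<phi> y v s"
proof -
  have "(LINT \<tau>:{-1<..<0}|lborel. (a * x (s + \<tau>) + b * y (s + \<tau>)) * \<phi> \<tau>) =
        (LINT \<tau>:{-1<..<0}|lborel. a * (x (s + \<tau>) * \<phi> \<tau>) + b * (y (s + \<tau>) * \<phi> \<tau>))"
    by (simp add: algebra_simps)
  also have "\<dots> = a * (LINT \<tau>:{-1<..<0}|lborel. x (s + \<tau>) * \<phi> \<tau>) +
                  b * (LINT \<tau>:{-1<..<0}|lborel. y (s + \<tau>) * \<phi> \<tau>)"
    using assms by (rule set_integral_lincomb)
  finally show ?thesis
    unfolding delay_rhs_def by (simp add: algebra_simps)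
qed

lemma is_solution_lincomb:
  assumes x: "is_solution \<phi> T \<xi> x0 u x" and y: "is_solution \<phi> T \<eta> y0 v y"
  shows "is_solution \<phi> T (a * \<xi> + b * \<eta>) (\<lambda>t. a * x0 t + b * y0 t) (\<lambda>t. a * u t + b * v t)
           (\<lambda>t. a * x t + b * y t)"
proof -
  note x' = x[unfolded is_solution_iff_delay_rhs] and y' = y[unfolded is_solution_iff_delay_rhs]
  have kernel: "set_integrable lborel {-1<..<0} (\<lambda>\<tau>. (a * x (s + \<tau>) + b * y (s + \<tau>)) * \<phi> \<tau>)"
    if "s \<in> {0..T}" for s
  proof -
    have "set_integrable lborel {-1<..<0} (\<lambda>\<tau>. a * (x (s + \<tau>) * \<phi> \<tau>) + b * (y (s + \<tau>) * \<phi> \<tau>))"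
      using x' y' that by auto
    then show ?thesis
      by (simp add: algebra_simps)
  qed
  have rhs: "delay_rhs \<phi> (\<lambda>t. a * x t + b * y t) (\<lambda>t. a * u t + b * v t) s =
             a * delay_rhs \<phi> x u s + b * delay_rhs \<phi> y v s" if "s \<in> {0..T}" for s
    using x' y' that by (intro delay_rhs_lincomb) auto
  have "set_integrable lborel {0..T} (\<lambda>s. a * delay_rhs \<phi> x u s + b * delay_rhs \<phi> y v s)"
    using x' y' by auto
  moreover have "set_integrable lborel {0..T} (delay_rhs \<phi> (\<lambda>t. a * x t + b * y t) (\<lambda>t. a * u t + b * v t))
      \<longleftrightarrow> set_integrable lborel {0..T} (\<lambda>s. a * delay_rhs \<phi> x u s + b * delay_rhs \<phi> y v s)"
    by (rule set_integrable_cong) (simp_all add: rhs)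
  ultimately have rhs_integrable:
    "set_integrable lborel {0..T} (delay_rhs \<phi> (\<lambda>t. a * x t + b * y t) (\<lambda>t. a * u t + b * v t))"
    by blast
  have integral_eq:
    "a * \<xi> + b * \<eta> + (LINT s:{0..t}|lborel. delay_rhs \<phi> (\<lambda>t. a * x t + b * y t) (\<lambda>t. a * u t + b * v t) s)
     = a * x t + b * y t" if t: "t \<in> {0..T}" for t
  proof -
    have sub: "{0..t} \<subseteq> {0..T}" using t by auto
    have "(LINT s:{0..t}|lborel. delay_rhs \<phi> (\<lambda>t. a * x t + b * y t) (\<lambda>t. a * u t + b * v t) s) =
          (LINT s:{0..t}|lborel. a * delay_rhs \<phi> x u s + b * delay_rhs \<phi> y v s)"
      by (rule set_lebesgue_integral_cong) (use rhs sub in auto)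
    also have "\<dots> = a * (LINT s:{0..t}|lborel. delay_rhs \<phi> x u s) +
                    b * (LINT s:{0..t}|lborel. delay_rhs \<phi> y v s)"
      using x' y' sub by (intro set_integral_lincomb) (auto intro: set_integrable_subset)
    finally show ?thesis
      using x' y' t by (simp add: algebra_simps)
  qed
  show ?thesis
    unfolding is_solution_iff_delay_rhs
  proof (intro conjI ballI)
    show "a * x t + b * y t = a * x0 t + b * y0 t" if "t \<in> {-1<..<0}" for t
      using x' y' that by simp
    show "a * x t + b * y t = a * \<xi> + b * \<eta> +
      (LINT s:{0..t}|lborel. delay_rhs \<phi> (\<lambda>t. a * x t + b * y t) (\<lambda>t. a * u t + b * v t) s)"
      if "t \<in> {0..T}" for t
      using integral_eq[OF that] by simp
  qed (use kernel rhs_integrable in auto)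
qed

lemma U_set_lincomb:
  assumes u: "u \<in> U_set \<phi> T \<xi> x0" and v: "v \<in> U_set \<phi> T \<eta> y0"
  shows "(\<lambda>t. a * u t + b * v t) \<in> U_set \<phi> T (a * \<xi> + b * \<eta>) (\<lambda>t. a * x0 t + b * y0 t)"
proof -
  from u obtain x where "L2_on {0<..<T} u" "is_solution \<phi> T \<xi> x0 u x" "\<forall>t\<in>{T-1<..<T}. x t = 0"
    unfolding U_set_def by blast
  moreover from v obtain y where "L2_on {0<..<T} v" "is_solution \<phi> T \<eta> y0 v y" "\<forall>t\<in>{T-1<..<T}. y t = 0"
    unfolding U_set_def by blast
  ultimately show ?thesis
    unfolding U_set_def by (auto intro!: L2_on_lincomb is_solution_lincomb)
qed

lemma U_set_add:
  assumes "u \<in> U_set \<phi> T \<xi> x0" "v \<in> U_set \<phi> T \<eta> y0"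
  shows "(\<lambda>t. u t + v t) \<in> U_set \<phi> T (\<xi> + \<eta>) (\<lambda>t. x0 t + y0 t)"
  using U_set_lincomb[OF assms, of 1 1] by simp

lemma U_set_diff:
  assumes "u \<in> U_set \<phi> T \<xi> x0" "v \<in> U_set \<phi> T \<xi> x0"
  shows "(\<lambda>t. v t - u t) \<in> U_set \<phi> T 0 (\<lambda>_. 0)"
  using U_set_lincomb[OF assms(2,1), of 1 "-1"] by simp

lemma U_set_add_null:
  assumes "u \<in> U_set \<phi> T \<xi> x0" "w \<in> U_set \<phi> T 0 (\<lambda>_. 0)"
  shows "(\<lambda>t. u t + c * w t) \<in> U_set \<phi> T \<xi> x0"
  using U_set_lincomb[OF assms, of 1 c] by simp

lemma U_set_imp_L2_on: "u \<in> U_set \<phi> T \<xi> x0 \<Longrightarrow> L2_on {0<..<T} u"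
  unfolding U_set_def by blast

definition L2_inner :: "real \<Rightarrow> (real \<Rightarrow> complex) \<Rightarrow> (real \<Rightarrow> complex) \<Rightarrow> real" where
  "L2_inner T u w = (LINT t:{0<..<T}|lborel. Re (u t * cnj (w t)))"

lemma L2_inner_add_left:
  assumes "L2_on {0<..<T} u" "L2_on {0<..<T} v" "L2_on {0<..<T} w"
  shows "L2_inner T (\<lambda>t. u t + v t) w = L2_inner T u w + L2_inner T v w"
proof -
  have "L2_inner T (\<lambda>t. u t + v t) w =
        (LINT t:{0<..<T}|lborel. Re (u t * cnj (w t)) + Re (v t * cnj (w t)))"
    unfolding L2_inner_def by (simp add: algebra_simps)
  then show ?thesis
    unfolding L2_inner_def
    using set_integrable_Re_mult_cnj[OF assms(1,3)] set_integrable_Re_mult_cnj[OF assms(2,3)] by simp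
qed

lemma L2_norm_sq_add_scaled:
  assumes "L2_on {0<..<T} u" "L2_on {0<..<T} w"
  shows "L2_norm_sq T (\<lambda>t. u t + of_real r * w t) =
         L2_norm_sq T u + 2 * r * L2_inner T u w + r\<^sup>2 * L2_norm_sq T w"
proof -
  have "set_integrable lborel {0<..<T} (\<lambda>t. (cmod (u t))\<^sup>2)"
    and "set_integrable lborel {0<..<T} (\<lambda>t. (cmod (w t))\<^sup>2)"
    and "set_integrable lborel {0<..<T} (\<lambda>t. Re (u t * cnj (w t)))"
    using assms set_integrable_Re_mult_cnj[OF assms] unfolding L2_on_def by auto
  then show ?thesis
    unfolding L2_norm_sq_def L2_inner_def cmod_add_scaled_power2 by simp
qed

lemma real_quadratic_nonneg_imp_linear_coeff_zero:
  fixes p c :: real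
  assumes "\<And>r. 0 \<le> 2 * r * p + r\<^sup>2 * c"
  shows "p = 0"
proof (rule ccontr)
  assume "p \<noteq> 0"
  define k where "k = \<bar>c\<bar> + 1"
  have "k > 0" "c < 2 * k" unfolding k_def by auto
  define r where "r = - p / k"
  have rk: "r * k = - p" unfolding r_def using \<open>k > 0\<close> by simp
  have "0 \<le> k\<^sup>2 * (2 * r * p + r\<^sup>2 * c)"
    using assms[of r] by simp
  also have "\<dots> = 2 * (r * k) * p * k + (r * k)\<^sup>2 * c"
    by (simp add: power2_eq_square algebra_simps)
  also have "\<dots> = p\<^sup>2 * (c - 2 * k)"
    unfolding rk by (simp add: power2_eq_square algebra_simps)
  also have "\<dots> < 0"
    using \<open>p \<noteq> 0\<close> \<open>c < 2 * k\<close> by (intro mult_pos_neg) auto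
  finally show False by simp
qed

lemma optimal_control_iff_orthogonal:
  "optimal_control \<phi> T \<xi> x0 u \<longleftrightarrow>
     u \<in> U_set \<phi> T \<xi> x0 \<and> (\<forall>w \<in> U_set \<phi> T 0 (\<lambda>_. 0). L2_inner T u w = 0)"
proof (intro iffI conjI ballI; (elim conjE)?)
  assume opt: "optimal_control \<phi> T \<xi> x0 u"
  then show u: "u \<in> U_set \<phi> T \<xi> x0"
    unfolding optimal_control_def by blast
  fix w assume w: "w \<in> U_set \<phi> T 0 (\<lambda>_. 0)"
  have "L2_norm_sq T u \<le> L2_norm_sq T (\<lambda>t. u t + of_real r * w t)" for r
    using opt U_set_add_null[OF u w] unfolding optimal_control_def by blast
  then have "0 \<le> 2 * r * L2_inner T u w + r\<^sup>2 * L2_norm_sq T w" for r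
    using L2_norm_sq_add_scaled[OF U_set_imp_L2_on[OF u] U_set_imp_L2_on[OF w]] by fastforce
  then show "L2_inner T u w = 0"
    by (rule real_quadratic_nonneg_imp_linear_coeff_zero)
next
  assume u: "u \<in> U_set \<phi> T \<xi> x0"
    and orth: "\<forall>w \<in> U_set \<phi> T 0 (\<lambda>_. 0). L2_inner T u w = 0"
  have "L2_norm_sq T u \<le> L2_norm_sq T v" if v: "v \<in> U_set \<phi> T \<xi> x0" for v
  proof -
    define w where "w t = v t - u t" for t
    have w: "w \<in> U_set \<phi> T 0 (\<lambda>_. 0)"
      unfolding w_def using U_set_diff[OF u v] .
    have "L2_norm_sq T v = L2_norm_sq T (\<lambda>t. u t + w t)"
      by (simp add: w_def)
    also have "\<dots> = L2_norm_sq T u + L2_norm_sq T w"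
      using L2_norm_sq_add_scaled[OF U_set_imp_L2_on[OF u] U_set_imp_L2_on[OF w], where r = 1] orth w
      by simp
    finally show ?thesis
      using L2_norm_sq_nonneg[of T w] by simp
  qed
  with u show "optimal_control \<phi> T \<xi> x0 u"
    unfolding optimal_control_def by blast
qed

theorem corollary1:
  fixes \<phi> x01 x02 u1 u2 :: "real \<Rightarrow> complex" and \<xi>1 \<xi>2 :: complex and T :: real
  assumes "L2_on {-1<..<0} \<phi>" and "T > 1"
    and "L2_on {-1<..<0} x01" and "L2_on {-1<..<0} x02"
    and "optimal_control \<phi> T \<xi>1 x01 u1"
    and "optimal_control \<phi> T \<xi>2 x02 u2"
  shows "optimal_control \<phi> T (\<xi>1 + \<xi>2) (\<lambda>t. x01 t + x02 t) (\<lambda>t. u1 t + u2 t)"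
proof -
  from assms(5,6) have u1: "u1 \<in> U_set \<phi> T \<xi>1 x01" and u2: "u2 \<in> U_set \<phi> T \<xi>2 x02"
    and orth1: "\<forall>w \<in> U_set \<phi> T 0 (\<lambda>_. 0). L2_inner T u1 w = 0"
    and orth2: "\<forall>w \<in> U_set \<phi> T 0 (\<lambda>_. 0). L2_inner T u2 w = 0"
    unfolding optimal_control_iff_orthogonal by blast+
  have "L2_inner T (\<lambda>t. u1 t + u2 t) w = 0" if w: "w \<in> U_set \<phi> T 0 (\<lambda>_. 0)" for w
    using L2_inner_add_left[OF U_set_imp_L2_on[OF u1] U_set_imp_L2_on[OF u2] U_set_imp_L2_on[OF w]]
      orth1 orth2 w by simp
  with U_set_add[OF u1 u2] show ?thesis
    unfolding optimal_control_iff_orthogonal by blast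
qed

end
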